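(* Let $p$ be a prime and $n$ a positive integer, let $T_n(\mathbf{Q}_p)$ be the ring of upper-triangular $n\times n$ matrices over $\mathbf{Q}_p$, and for $A=\{a_{j,k}\}\in T_n(\mathbf{Q}_p)$ put $$N(A)=\max_{1\le j<k\le n}|a_{j,k}|_p^{1/(k-j)}.$$ For $r\in\mathbf{Q}_p$ let $\delta_r(A)$ be the matrix whose $(j,k)$ entry is $r^{k-j}a_{j,k}$ for $j<k$, $a_{j,j}$ for $j=k$, and $0$ for $j>k$. Then $N(A+A')\le\max(N(A),N(A'))$ and $N(\delta_r(A))=|r|_pN(A)$ for all $A,A'\in T_n(\mathbf{Q}_p)$, $r\in\mathbf{Q}_p$; and if $A,A'\in T_n(\mathbf{Q}_p)$ have all their diagonal entries in $\mathbf{Z}_p$, then $N(AA')\le\max(N(A),N(A'))$.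
   Context: $|\cdot|_p$ is the $p$-adic absolute value on $\mathbf{Q}_p$, and $\mathbf{Z}_p=\{x\in\mathbf{Q}_p:|x|_p\le1\}$. For $n=1$ the maximum over an empty set is taken to be $0$. *)

theory Defs
  imports "HOL-Computational_Algebra.Computational_Algebra" Complex_Main
begin

definition padic_abs_rat :: "nat \<Rightarrow> rat \<Rightarrow> real" where
  "padic_abs_rat p q =
     (if q = 0 then 0
      else (let (a, b) = quotient_of q
            in real p powr (- (real (multiplicity (int p) a) - real (multiplicity (int p) b)))))"

text \<open>Characterisation of (a model of) the field Q_p together with its absolute value
  |.|_p: a field of characteristic 0 with a multiplicative, ultrametric absolute value
  restricting to the p-adic absolute value on Q, complete, and in which Q is dense.
  Such a pair is unique up to isometric isomorphism, namely Q_p.\<close>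
definition is_Qp :: "nat \<Rightarrow> ('a::field_char_0 \<Rightarrow> real) \<Rightarrow> bool" where
  "is_Qp p av \<longleftrightarrow>
     (\<forall>x. av x \<ge> 0 \<and> (av x = 0 \<longleftrightarrow> x = 0)) \<and>
     (\<forall>x y. av (x * y) = av x * av y) \<and>
     (\<forall>x y. av (x + y) \<le> max (av x) (av y)) \<and>
     (\<forall>q. av (of_rat q) = padic_abs_rat p q) \<and>
     (\<forall>X::nat \<Rightarrow> 'a. (\<forall>e>0. \<exists>M. \<forall>m\<ge>M. \<forall>k\<ge>M. av (X m - X k) < e)
         \<longrightarrow> (\<exists>L. \<forall>e>0. \<exists>M. \<forall>m\<ge>M. av (X m - L) < e)) \<and>
     (\<forall>x. \<forall>e>0. \<exists>q. av (x - of_rat q) < e)"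

text \<open>n x n matrices are functions nat => nat => 'a, indexed by 1..n, with all
  entries outside {1..n} x {1..n} equal to 0.  T_n = upper-triangular ones.\<close>
definition upper_tri :: "nat \<Rightarrow> (nat \<Rightarrow> nat \<Rightarrow> 'a::zero) set" where
  "upper_tri n = {A. \<forall>j k. (j \<notin> {1..n} \<or> k \<notin> {1..n} \<or> j > k) \<longrightarrow> A j k = 0}"

definition mat_add :: "(nat \<Rightarrow> nat \<Rightarrow> 'a::plus) \<Rightarrow> (nat \<Rightarrow> nat \<Rightarrow> 'a) \<Rightarrow> nat \<Rightarrow> nat \<Rightarrow> 'a" where
  "mat_add A B = (\<lambda>j k. A j k + B j k)"

definition mat_mul :: "nat \<Rightarrow> (nat \<Rightarrow> nat \<Rightarrow> 'a::comm_semiring_0) \<Rightarrow> (nat \<Rightarrow> nat \<Rightarrow> 'a) \<Rightarrow> nat \<Rightarrow> nat \<Rightarrow> 'a" where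
  "mat_mul n A B = (\<lambda>j k. \<Sum>l\<in>{1..n}. A j l * B l k)"

text \<open>N(A) = max_{1<=j<k<=n} |a_{jk}|^(1/(k-j)); the maximum over the empty set
  (n = 1) is 0.  Since all values are >= 0, inserting 0 realises this convention.\<close>
definition Nnorm :: "('a \<Rightarrow> real) \<Rightarrow> nat \<Rightarrow> (nat \<Rightarrow> nat \<Rightarrow> 'a) \<Rightarrow> real" where
  "Nnorm av n A = Max (insert 0 {root (k - j) (av (A j k)) | j k. 1 \<le> j \<and> j < k \<and> k \<le> n})"

definition delta :: "nat \<Rightarrow> 'a::comm_ring_1 \<Rightarrow> (nat \<Rightarrow> nat \<Rightarrow> 'a) \<Rightarrow> nat \<Rightarrow> nat \<Rightarrow> 'a" where
  "delta n r A = (\<lambda>j k. if j \<in> {1..n} \<and> k \<in> {1..n} then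
                          (if j < k then r ^ (k - j) * A j k else if j = k then A j j else 0)
                        else 0)"

end

theory Submission
  imports Defs
begin

text \<open>Only the axioms of a non-archimedean absolute value are needed, not completeness or the
  p-adic normalisation.  The bound N(A) \<le> c says exactly that |a_{jk}| \<le> c^(k-j) for j < k, so
  the first two claims are entrywise.  For the product, an entry of AA' is a sum of terms
  a_{jl} a'_{lk} with j \<le> l \<le> k, each bounded by M^(l-j) M^(k-l) = M^(k-j) for M the larger of
  the two norms (the diagonal entries contributing factors of size at most 1 = M^0), and the
  ultrametric inequality bounds the sum by the largest term.\<close>

locale nonarch_abs =
  fixes av :: "'a::field \<Rightarrow> real"
  assumes nonneg: "av x \<ge> 0"
    and zero_iff: "av x = 0 \<longleftrightarrow> x = 0"
    and mult: "av (x * y) = av x * av y"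
    and ultra: "av (x + y) \<le> max (av x) (av y)"
begin

lemma zero [simp]: "av 0 = 0"
  by (simp add: zero_iff)

lemma one [simp]: "av 1 = 1"
proof -
  have "av 1 * (av 1 - 1) = 0"
    using mult[of 1 1] by (simp add: algebra_simps)
  moreover have "av 1 \<noteq> 0"
    by (simp add: zero_iff)
  ultimately show ?thesis by simp
qed

lemma power: "av (x ^ m) = av x ^ m"
  by (induction m) (simp_all add: mult)

lemma sum_le:
  assumes "finite S" and "0 \<le> B" and "\<And>i. i \<in> S \<Longrightarrow> av (f i) \<le> B"
  shows "av (sum f S) \<le> B"
  using assms
proof (induction S rule: finite_induct)
  case (insert x F)
  have "av (sum f (insert x F)) \<le> max (av (f x)) (av (sum f F))"
    using ultra insert.hyps by simp
  also have "\<dots> \<le> B"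
    using insert by simp
  finally show ?case .
qed simp

lemma finite_Nnorm_entries:
  "finite {root (k - j) (av (A j k)) | j k. 1 \<le> j \<and> j < k \<and> k \<le> n}"
proof (rule finite_subset)
  show "{root (k - j) (av (A j k)) | j k. 1 \<le> j \<and> j < k \<and> k \<le> n}
        \<subseteq> (\<lambda>(j, k). root (k - j) (av (A j k))) ` ({..n} \<times> {..n})"
    by auto
qed simp

lemma Nnorm_nonneg: "0 \<le> Nnorm av n A"
  unfolding Nnorm_def by (rule Max_ge[OF finite.insertI[OF finite_Nnorm_entries]]) simp

lemma Nnorm_le_iff:
  assumes "0 \<le> c"
  shows "Nnorm av n A \<le> c \<longleftrightarrow>
           (\<forall>j k. 1 \<le> j \<longrightarrow> j < k \<longrightarrow> k \<le> n \<longrightarrow> av (A j k) \<le> c ^ (k - j))"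
proof -
  have root_le: "root (k - j) (av (A j k)) \<le> c \<longleftrightarrow> av (A j k) \<le> c ^ (k - j)"
    if "j < k" for j k
    using that assms nonneg by (metis real_root_le_iff real_root_pos_unique zero_less_diff)
  show ?thesis
    unfolding Nnorm_def Max_le_iff[OF finite.insertI[OF finite_Nnorm_entries] insert_not_empty]
    using assms by (auto simp flip: root_le)
qed

lemma entry_le_Nnorm_power:
  assumes "1 \<le> j" "j < k" "k \<le> n"
  shows "av (A j k) \<le> Nnorm av n A ^ (k - j)"
  using Nnorm_le_iff[OF Nnorm_nonneg, of n A] assms by blast

lemma Nnorm_mat_add_le:
  "Nnorm av n (mat_add A A') \<le> max (Nnorm av n A) (Nnorm av n A')"
proof -
  let ?M = "max (Nnorm av n A) (Nnorm av n A')"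
  have M_nonneg: "0 \<le> ?M"
    by (simp add: Nnorm_nonneg le_max_iff_disj)
  have "av (A j k + A' j k) \<le> ?M ^ (k - j)" if "1 \<le> j" "j < k" "k \<le> n" for j k
  proof -
    have "av (A j k + A' j k) \<le> max (av (A j k)) (av (A' j k))"
      by (rule ultra)
    also have "\<dots> \<le> max (Nnorm av n A ^ (k - j)) (Nnorm av n A' ^ (k - j))"
      using entry_le_Nnorm_power[OF that] by (simp add: max.coboundedI1 max.coboundedI2)
    also have "\<dots> \<le> ?M ^ (k - j)"
      by (simp add: Nnorm_nonneg power_mono)
    finally show ?thesis .
  qed
  then show ?thesis
    by (simp add: Nnorm_le_iff[OF M_nonneg] mat_add_def)
qed

lemma av_delta_entry:
  assumes "1 \<le> j" "j < k" "k \<le> n"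
  shows "av (delta n r A j k) = av r ^ (k - j) * av (A j k)"
  using assms by (simp add: delta_def mult power)

lemma Nnorm_delta: "Nnorm av n (delta n r A) = av r * Nnorm av n A"
proof (rule antisym)
  have "av r ^ (k - j) * av (A j k) \<le> (av r * Nnorm av n A) ^ (k - j)"
    if "1 \<le> j" "j < k" "k \<le> n" for j k
    using entry_le_Nnorm_power[OF that, of A] nonneg
    by (simp add: power_mult_distrib mult_left_mono)
  then show "Nnorm av n (delta n r A) \<le> av r * Nnorm av n A"
    by (simp add: Nnorm_le_iff nonneg Nnorm_nonneg av_delta_entry)
next
  show "av r * Nnorm av n A \<le> Nnorm av n (delta n r A)"
  proof (cases "av r = 0")
    case True
    then show ?thesis by (simp add: Nnorm_nonneg)
  next
    case False
    then have r_pos: "0 < av r"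
      using nonneg order_less_le by metis
    let ?c = "Nnorm av n (delta n r A) / av r"
    have "av (A j k) \<le> ?c ^ (k - j)" if "1 \<le> j" "j < k" "k \<le> n" for j k
      using entry_le_Nnorm_power[OF that, of "delta n r A"] r_pos
      by (simp add: av_delta_entry[OF that] power_divide field_simps)
    then have "Nnorm av n A \<le> ?c"
      using r_pos by (simp add: Nnorm_le_iff Nnorm_nonneg)
    then show ?thesis
      using r_pos by (simp add: field_simps)
  qed
qed

lemma entry_le_power_of_Nnorm_le:
  assumes "Nnorm av n A \<le> M" and "\<forall>j\<in>{1..n}. av (A j j) \<le> 1"
    and "1 \<le> j" "j \<le> k" "k \<le> n"
  shows "av (A j k) \<le> M ^ (k - j)"
proof (cases "j = k")
  case True
  then show ?thesis using assms by simp
next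
  case False
  have "av (A j k) \<le> Nnorm av n A ^ (k - j)"
    using False assms by (simp add: entry_le_Nnorm_power)
  also have "\<dots> \<le> M ^ (k - j)"
    using assms(1) by (simp add: Nnorm_nonneg power_mono)
  finally show ?thesis .
qed

lemma Nnorm_mat_mul_le:
  assumes A: "A \<in> upper_tri n" and A': "A' \<in> upper_tri n"
    and diag: "\<forall>j\<in>{1..n}. av (A j j) \<le> 1" and diag': "\<forall>j\<in>{1..n}. av (A' j j) \<le> 1"
    and le: "Nnorm av n A \<le> M" and le': "Nnorm av n A' \<le> M"
  shows "Nnorm av n (mat_mul n A A') \<le> M"
proof -
  have M_nonneg: "0 \<le> M"
    using le Nnorm_nonneg order_trans by blast
  have "av (A j l * A' l k) \<le> M ^ (k - j)"
    if jk: "1 \<le> j" "j < k" "k \<le> n" and l: "l \<in> {1..n}" for j k l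
  proof (cases "j \<le> l \<and> l \<le> k")
    case True
    have "av (A j l * A' l k) \<le> M ^ (l - j) * M ^ (k - l)"
      using entry_le_power_of_Nnorm_le[OF le diag, of j l]
        entry_le_power_of_Nnorm_le[OF le' diag', of l k] True jk l
      by (simp add: mult mult_mono nonneg M_nonneg)
    also have "\<dots> = M ^ (k - j)"
      using True by (simp flip: power_add)
    finally show ?thesis .
  next
    case False
    then have "A j l = 0 \<or> A' l k = 0"
      using A A' by (auto simp: upper_tri_def)
    then show ?thesis
      using M_nonneg by auto
  qed
  then show ?thesis
    unfolding Nnorm_le_iff[OF M_nonneg] mat_mul_def by (auto intro!: sum_le simp: M_nonneg)
qed

end

lemma is_Qp_nonarch_abs:
  assumes "is_Qp p av"
  shows "nonarch_abs av"
  using assms by unfold_locales (auto simp: is_Qp_def)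

theorem mainTheorem4:
  fixes p n :: nat and av :: "'a::field_char_0 \<Rightarrow> real"
  assumes "prime p" and "n \<ge> 1" and "is_Qp p av"
  shows "(\<forall>A\<in>upper_tri n. \<forall>A'\<in>upper_tri n.
            Nnorm av n (mat_add A A') \<le> max (Nnorm av n A) (Nnorm av n A'))
     \<and> (\<forall>A\<in>upper_tri n. \<forall>r.
            Nnorm av n (delta n r A) = av r * Nnorm av n A)
     \<and> (\<forall>A\<in>upper_tri n. \<forall>A'\<in>upper_tri n.
            (\<forall>j\<in>{1..n}. av (A j j) \<le> 1) \<longrightarrow> (\<forall>j\<in>{1..n}. av (A' j j) \<le> 1) \<longrightarrow>
            Nnorm av n (mat_mul n A A') \<le> max (Nnorm av n A) (Nnorm av n A'))"
proof -
  interpret nonarch_abs av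
    using assms(3) by (rule is_Qp_nonarch_abs)
  show ?thesis
    by (simp add: Nnorm_mat_add_le Nnorm_delta Nnorm_mat_mul_le)
qed

end
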